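(* Let $s,r,R$ be positive integers with $s\ge 2$, and let $\delta=(r+1)(R+1)-sr-1$. Suppose $\delta\ge 1$ and $R+1\le sr$ (so that $B(R)\neq\mathbb F_q^{s\times r}$). Then there exists an $R$-sticky vector $m\in\mathbb F_q^{s\times r}$ for $B(R)$; i.e. there is $m\notin B(R)$ such that every ball $B(c,R)$ containing $m$ intersects $B(R)$. Consequently, for $\delta\ge 1$ there are no non-trivial $R$-perfect codes in $\mathbb F_q^{s\times r}$ with respect to the NRT metric.
   Context: $q$ is a prime power, $\mathbb F_q^{s\times r}$ the set of $s\times r$ matrices over $\mathbb F_q$ with rows $x_1,\dots,x_s\in\mathbb F_q^{1\times r}$. For a row $y=(y_1,\dots,y_r)$, the NRT weight is $w(y)=\max\{j: y_j\neq 0\}$ if $y\neq 0$ and $w(0)=0$; for a matrix $x$, $w(x)=\sum_i w(x_i)$. The NRT metric is $d(x,y)=w(x-y)$; $B(c,R)=\{x: d(x,c)\le R\}$, $B(R)=B(0,R)$. The $R$-closure of $S$ is the set of points $p$ such that every ball of radius $R$ containing $p$ contains some point of $S$; elements of the $R$-closure of $S$ not in $S$ are called $R$-sticky vectors for $S$. A code $C\subseteq\mathbb F_q^{s\times r}$ is $R$-perfect if the balls $B(c,R)$, $c\in C$, are pairwise disjoint and cover $\mathbb F_q^{s\times r}$; it is non-trivial if $|C|>1$ and $C\ne\mathbb F_q^{s\times r}$. *)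

theory Defs
  imports Main
begin

text \<open>Matrices in F^{s x r} are represented as functions nat => nat => 'a
  (row index i < s, column index j < r, 0-based) vanishing outside the box.\<close>

definition mats :: "nat \<Rightarrow> nat \<Rightarrow> (nat \<Rightarrow> nat \<Rightarrow> 'a::zero) set" where
  "mats s r = {x. \<forall>i j. (s \<le> i \<or> r \<le> j) \<longrightarrow> x i j = 0}"

definition row_wt :: "nat \<Rightarrow> (nat \<Rightarrow> 'a::zero) \<Rightarrow> nat" where
  "row_wt r y = (if \<forall>j<r. y j = 0 then 0 else Suc (Max {j. j < r \<and> y j \<noteq> 0}))"

definition nrt_wt :: "nat \<Rightarrow> nat \<Rightarrow> (nat \<Rightarrow> nat \<Rightarrow> 'a::zero) \<Rightarrow> nat" where
  "nrt_wt s r x = (\<Sum>i<s. row_wt r (x i))"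

definition nrt_dist :: "nat \<Rightarrow> nat \<Rightarrow> (nat \<Rightarrow> nat \<Rightarrow> 'a::ab_group_add) \<Rightarrow> (nat \<Rightarrow> nat \<Rightarrow> 'a) \<Rightarrow> nat" where
  "nrt_dist s r x y = nrt_wt s r (\<lambda>i j. x i j - y i j)"

definition nrt_ball :: "nat \<Rightarrow> nat \<Rightarrow> (nat \<Rightarrow> nat \<Rightarrow> 'a::ab_group_add) \<Rightarrow> nat \<Rightarrow> (nat \<Rightarrow> nat \<Rightarrow> 'a) set" where
  "nrt_ball s r c R = {x \<in> mats s r. nrt_dist s r x c \<le> R}"

definition nrt_closure :: "nat \<Rightarrow> nat \<Rightarrow> nat \<Rightarrow> (nat \<Rightarrow> nat \<Rightarrow> 'a::ab_group_add) set \<Rightarrow> (nat \<Rightarrow> nat \<Rightarrow> 'a) set" where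
  "nrt_closure s r R S = {p \<in> mats s r. \<forall>c \<in> mats s r. p \<in> nrt_ball s r c R \<longrightarrow> nrt_ball s r c R \<inter> S \<noteq> {}}"

definition sticky :: "nat \<Rightarrow> nat \<Rightarrow> nat \<Rightarrow> (nat \<Rightarrow> nat \<Rightarrow> 'a::ab_group_add) set \<Rightarrow> (nat \<Rightarrow> nat \<Rightarrow> 'a) \<Rightarrow> bool" where
  "sticky s r R S m \<longleftrightarrow> m \<in> nrt_closure s r R S \<and> m \<notin> S"

definition perfect_code :: "nat \<Rightarrow> nat \<Rightarrow> nat \<Rightarrow> (nat \<Rightarrow> nat \<Rightarrow> 'a::ab_group_add) set \<Rightarrow> bool" where
  "perfect_code s r R C \<longleftrightarrow> C \<subseteq> mats s r
     \<and> (\<forall>c\<in>C. \<forall>c'\<in>C. c \<noteq> c' \<longrightarrow> nrt_ball s r c R \<inter> nrt_ball s r c' R = {})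
     \<and> (\<Union>c\<in>C. nrt_ball s r c R) = mats s r"

definition nontrivial_code :: "nat \<Rightarrow> nat \<Rightarrow> (nat \<Rightarrow> nat \<Rightarrow> 'a::zero) set \<Rightarrow> bool" where
  "nontrivial_code s r C \<longleftrightarrow> card C > 1 \<and> C \<noteq> mats s r"

end

theory Submission
  imports Defs
begin

text \<open>Row weights form an ultrametric, so a centre c within distance R of m has, in every row
  where it is closer to m than m's own weight, the same row weight as m. Take m with one nonzero
  entry per row and row weights summing to R + 1. Given such a c, either some row of c is far
  from m, and deleting that row from m yields a point of B(R) within R of c, or all rows of c
  have the weights of m, and deleting one row from c yields such a point. If R + 1 < s, take
  instead all row weights 1; then deleting from c all but about R rows works, which is where
  \<delta> \<ge> 1 is needed. Translating a sticky vector of B(R) to a codeword shows that two balls of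
  any perfect code with at least one codeword would meet.\<close>

lemma row_wt_le_iff: "row_wt r y \<le> k \<longleftrightarrow> (\<forall>j. k \<le> j \<longrightarrow> j < r \<longrightarrow> y j = 0)"
proof (cases "\<forall>j<r. y j = 0")
  case True
  then show ?thesis by (auto simp: row_wt_def)
next
  case False
  let ?S = "{j. j < r \<and> y j \<noteq> 0}"
  have fin: "finite ?S" by (rule finite_subset[of _ "{..<r}"]) auto
  have ne: "?S \<noteq> {}" using False by auto
  have "row_wt r y = Suc (Max ?S)" using False by (simp add: row_wt_def)
  moreover have "Suc (Max ?S) \<le> k \<longleftrightarrow> (\<forall>j\<in>?S. j < k)"
    using Max_less_iff[OF fin ne, of k] by (simp add: Suc_le_eq)
  ultimately show ?thesis by (auto simp: not_less)
qed

lemma row_wt_le: "row_wt r y \<le> r"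
  by (simp add: row_wt_le_iff)

lemma row_wt_zero [simp]: "row_wt r (\<lambda>j. 0) = 0"
  by (simp add: row_wt_def)

lemma row_wt_uminus [simp]: "row_wt r (\<lambda>j. - u j) = row_wt r (u :: nat \<Rightarrow> 'a::ab_group_add)"
  by (rule antisym) (simp_all add: row_wt_le_iff)

lemma row_wt_diff_commute:
  "row_wt r (\<lambda>j. v j - u j) = row_wt r (\<lambda>j. u j - (v j :: 'a::ab_group_add))"
  using row_wt_uminus[of r "\<lambda>j. u j - v j"] by simp

lemma row_wt_add_le_max:
  "row_wt r (\<lambda>j. u j + v j) \<le> max (row_wt r u) (row_wt r (v :: nat \<Rightarrow> 'a::ab_group_add))"
  unfolding row_wt_le_iff[of r "\<lambda>j. u j + v j"]
  using row_wt_le_iff[of r u "max (row_wt r u) (row_wt r v)"]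
    row_wt_le_iff[of r v "max (row_wt r u) (row_wt r v)"] by auto

lemma row_wt_le_max_diff:
  "row_wt r v \<le> max (row_wt r u) (row_wt r (\<lambda>j. u j - (v j :: 'a::ab_group_add)))"
  using row_wt_add_le_max[of r u "\<lambda>j. - (u j - v j)"] row_wt_diff_commute[of r v u] by simp

lemma row_wt_eq_if_diff_less:
  assumes "row_wt r (\<lambda>j. u j - v j) < row_wt r (u :: nat \<Rightarrow> 'a::ab_group_add)"
  shows "row_wt r v = row_wt r u"
  using row_wt_le_max_diff[of r v u] row_wt_le_max_diff[of r u v] row_wt_diff_commute[of r v u]
    assms by linarith

lemma nrt_dist_zero_right [simp]: "nrt_dist s r x (\<lambda>i j. 0) = nrt_wt s r x"
  by (simp add: nrt_dist_def)

lemma nrt_dist_translate: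
  "nrt_dist s r (\<lambda>i j. x i j + a i j) (\<lambda>i j. y i j + a i j) =
   nrt_dist s r x (y :: nat \<Rightarrow> nat \<Rightarrow> 'a::ab_group_add)"
  by (simp add: nrt_dist_def)

lemma mats_add:
  "x \<in> mats s r \<Longrightarrow> y \<in> mats s r \<Longrightarrow> (\<lambda>i j. x i j + y i j :: 'a::monoid_add) \<in> mats s r"
  by (simp add: mats_def)

lemma mats_diff:
  "x \<in> mats s r \<Longrightarrow> y \<in> mats s r \<Longrightarrow> (\<lambda>i j. x i j - y i j :: 'a::ab_group_add) \<in> mats s r"
  by (simp add: mats_def)

definition restrict_rows :: "nat set \<Rightarrow> (nat \<Rightarrow> nat \<Rightarrow> 'a::zero) \<Rightarrow> nat \<Rightarrow> nat \<Rightarrow> 'a" where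
  "restrict_rows S x = (\<lambda>i j. if i \<in> S then x i j else 0)"

lemma restrict_rows_mats: "x \<in> mats s r \<Longrightarrow> restrict_rows S x \<in> mats s r"
  by (simp add: mats_def restrict_rows_def)

lemma nrt_wt_restrict_rows:
  "nrt_wt s r (restrict_rows S x) = (\<Sum>i\<in>{..<s} \<inter> S. row_wt r (x i))"
  unfolding nrt_wt_def restrict_rows_def
  by (subst sum.inter_restrict) (auto intro: sum.cong)

lemma nrt_dist_restrict_rows:
  "nrt_dist s r (restrict_rows S x) x = (\<Sum>i\<in>{..<s} - S. row_wt r (x i :: nat \<Rightarrow> 'a::ab_group_add))"
proof -
  have "nrt_dist s r (restrict_rows S x) x = (\<Sum>i<s. if i \<in> S then 0 else row_wt r (x i))"
    unfolding nrt_dist_def nrt_wt_def restrict_rows_def by (rule sum.cong) auto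
  then show ?thesis by (simp add: sum.If_cases Diff_eq)
qed

lemma sticky_zero_ball_iff:
  "sticky s r R (nrt_ball s r (\<lambda>i j. 0) R) m \<longleftrightarrow>
     m \<in> mats s r \<and> R < nrt_wt s r m \<and>
     (\<forall>c\<in>mats s r. nrt_dist s r m c \<le> R \<longrightarrow>
        (\<exists>x\<in>mats s r. nrt_dist s r x c \<le> R \<and> nrt_wt s r x \<le> R))"
  by (auto simp: sticky_def nrt_closure_def nrt_ball_def)

lemma no_perfect_code_if_sticky:
  fixes m :: "nat \<Rightarrow> nat \<Rightarrow> 'a::ab_group_add" and C :: "(nat \<Rightarrow> nat \<Rightarrow> 'a) set"
  assumes m: "sticky s r R (nrt_ball s r (\<lambda>i j. 0) R) m"
    and C: "perfect_code s r R C" "c0 \<in> C"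
  shows False
proof -
  have C_mats: "C \<subseteq> mats s r" and cover: "(\<Union>c\<in>C. nrt_ball s r c R) = mats s r"
    and disjoint: "\<And>c c'. c \<in> C \<Longrightarrow> c' \<in> C \<Longrightarrow> c \<noteq> c' \<Longrightarrow> nrt_ball s r c R \<inter> nrt_ball s r c' R = {}"
    using C(1) by (auto simp: perfect_code_def)
  have c0: "c0 \<in> mats s r" using C(2) C_mats by blast
  have m_mats: "m \<in> mats s r" and m_far: "R < nrt_wt s r m"
    and m_sticky: "\<And>c. c \<in> mats s r \<Longrightarrow> nrt_dist s r m c \<le> R \<Longrightarrow>
      \<exists>x\<in>mats s r. nrt_dist s r x c \<le> R \<and> nrt_wt s r x \<le> R"
    using m by (auto simp: sticky_zero_ball_iff)
  obtain c where c: "c \<in> C" "(\<lambda>i j. m i j + c0 i j) \<in> nrt_ball s r c R"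
    using cover mats_add[OF m_mats c0] by blast
  define c' where "c' = (\<lambda>i j. c i j - c0 i j)"
  have c_eq: "c = (\<lambda>i j. c' i j + c0 i j)" by (simp add: c'_def)
  have c'_mats: "c' \<in> mats s r" using c C_mats c0 by (auto simp: c'_def intro: mats_diff)
  have m_c': "nrt_dist s r m c' \<le> R"
    using c(2) by (simp add: nrt_ball_def c_eq nrt_dist_translate)
  have "c \<noteq> c0"
    using m_c' m_far by (auto simp: c'_def)
  obtain x where x: "x \<in> mats s r" "nrt_dist s r x c' \<le> R" "nrt_wt s r x \<le> R"
    using m_sticky[OF c'_mats m_c'] by blast
  have "(\<lambda>i j. x i j + c0 i j) \<in> nrt_ball s r c R \<inter> nrt_ball s r c0 R"
    using x mats_add[OF x(1) c0] nrt_dist_translate[of s r x c0 "\<lambda>i j. 0"]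
    by (simp add: nrt_ball_def c_eq nrt_dist_translate)
  then show False using disjoint[OF c(1) C(2) \<open>c \<noteq> c0\<close>] by blast
qed

lemma exists_bounded_summands:
  assumes "s \<le> N" "N \<le> s * r"
  shows "\<exists>t::nat \<Rightarrow> nat. (\<forall>i<s. 1 \<le> t i \<and> t i \<le> r) \<and> (\<Sum>i<s. t i) = N"
  using assms(1)
proof (induction N rule: dec_induct)
  case base
  have "s = 0 \<or> 1 \<le> r" using assms by (cases r) auto
  then show ?case by (intro exI[of _ "\<lambda>_. 1"]) auto
next
  case (step n)
  then obtain t where t: "\<forall>i<s. 1 \<le> t i \<and> t i \<le> r" "(\<Sum>i<s. t i) = n" by auto
  have "\<exists>i<s. t i < r"
  proof (rule ccontr)
    assume "\<not> ?thesis"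
    then have "(\<Sum>i<s. r) \<le> (\<Sum>i<s. t i)" by (intro sum_mono) (meson lessThan_iff not_le)
    then show False using t step assms by simp
  qed
  then obtain i where i: "i < s" "t i < r" by auto
  have "(\<Sum>k<s. (t(i := Suc (t i))) k) = (\<Sum>k<s. t k) + 1"
    using i by (simp add: sum.remove[of "{..<s}" i])
  with t i show ?case by (intro exI[of _ "t(i := Suc (t i))"]) auto
qed

definition profile_mat :: "nat \<Rightarrow> (nat \<Rightarrow> nat) \<Rightarrow> nat \<Rightarrow> nat \<Rightarrow> 'a::zero_neq_one" where
  "profile_mat s t i j = (if i < s \<and> Suc j = t i then 1 else 0)"

lemma profile_mat_mats: "\<forall>i<s. t i \<le> r \<Longrightarrow> profile_mat s t \<in> mats s r"
  by (auto simp: mats_def profile_mat_def)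

lemma row_wt_profile_mat:
  assumes "i < s" "1 \<le> t i" "t i \<le> r"
  shows "row_wt r (profile_mat s t i :: nat \<Rightarrow> 'a::zero_neq_one) = t i"
proof (rule antisym)
  show "row_wt r (profile_mat s t i :: nat \<Rightarrow> 'a) \<le> t i"
    by (auto simp: row_wt_le_iff profile_mat_def)
  have "(profile_mat s t i (t i - 1) :: 'a) \<noteq> 0" using assms by (simp add: profile_mat_def)
  then have "\<not> row_wt r (profile_mat s t i :: nat \<Rightarrow> 'a) \<le> t i - 1"
    using assms unfolding row_wt_le_iff by force
  then show "t i \<le> row_wt r (profile_mat s t i :: nat \<Rightarrow> 'a)" by simp
qed

lemma nrt_wt_profile_mat:
  assumes "\<forall>i<s. 1 \<le> t i \<and> t i \<le> r"
  shows "nrt_wt s r (profile_mat s t :: nat \<Rightarrow> nat \<Rightarrow> 'a::zero_neq_one) = (\<Sum>i<s. t i)"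
  using assms by (simp add: nrt_wt_def row_wt_profile_mat)

lemma profile_mat_ball_meets_zero_ball:
  fixes c :: "nat \<Rightarrow> nat \<Rightarrow> 'a::{ab_group_add,zero_neq_one}"
  assumes t: "\<forall>i<s. 1 \<le> t i \<and> t i \<le> r" "(\<Sum>i<s. t i) = R + 1" and "2 \<le> s"
    and c: "c \<in> mats s r" "nrt_dist s r (profile_mat s t) c \<le> R"
  shows "\<exists>x\<in>mats s r. nrt_dist s r x c \<le> R \<and> nrt_wt s r x \<le> R"
proof -
  define m where "m = (profile_mat s t :: nat \<Rightarrow> nat \<Rightarrow> 'a)"
  have m_mats: "m \<in> mats s r" using t by (simp add: m_def profile_mat_mats)
  have m_row: "row_wt r (m i) = t i" if "i < s" for i
    using t that by (simp add: m_def row_wt_profile_mat)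
  define d where "d i = row_wt r (\<lambda>j. m i j - c i j)" for i
  have d_sum: "(\<Sum>i<s. d i) \<le> R" using c(2) by (simp add: nrt_dist_def nrt_wt_def d_def m_def)
  have t_removed: "(\<Sum>i\<in>{..<s} - {i0}. t i) + t i0 = R + 1" if "i0 < s" for i0
    using t(2) that by (simp add: sum.remove[of "{..<s}" i0])
  show ?thesis
  proof (cases "\<exists>i0<s. t i0 \<le> d i0")
    case True
    then obtain i0 where i0: "i0 < s" "t i0 \<le> d i0" by auto
    define x where "x = restrict_rows (- {i0}) m"
    have "nrt_wt s r x = (\<Sum>i\<in>{..<s} - {i0}. t i)"
      by (simp add: x_def nrt_wt_restrict_rows Diff_eq m_row)
    then have "nrt_wt s r x \<le> R" using t_removed[OF i0(1)] t(1) i0(1) by force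
    moreover have "nrt_dist s r x c \<le> (\<Sum>i<s. d i)"
      unfolding nrt_dist_def nrt_wt_def
    proof (rule sum_mono)
      fix i
      have "row_wt r (c i0) \<le> d i0"
        using row_wt_le_max_diff[of r "c i0" "m i0"] m_row[OF i0(1)] i0(2) by (simp add: d_def)
      then show "row_wt r (\<lambda>j. x i j - c i j) \<le> d i"
        by (cases "i = i0") (simp_all add: x_def restrict_rows_def d_def)
    qed
    ultimately show ?thesis
      using d_sum restrict_rows_mats[OF m_mats] by (force simp: x_def)
  next
    case False
    have c_row: "row_wt r (c i) = t i" if "i < s" for i
      using row_wt_eq_if_diff_less[of r "m i" "c i"] False that m_row[OF that]
      by (simp add: d_def not_le)
    define x where "x = restrict_rows (- {0}) c"
    have "nrt_wt s r x = (\<Sum>i\<in>{..<s} - {0}. t i)"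
      by (simp add: x_def nrt_wt_restrict_rows Diff_eq c_row)
    then have "nrt_wt s r x \<le> R" using t_removed[of 0] t(1) \<open>2 \<le> s\<close> by force
    moreover have "nrt_dist s r x c = t 0"
      using \<open>2 \<le> s\<close> by (simp add: x_def nrt_dist_restrict_rows c_row)
    moreover have "t 0 \<le> R"
    proof -
      have "t 0 + t 1 \<le> (\<Sum>i<s. t i)"
        using \<open>2 \<le> s\<close> sum_mono2[of "{..<s}" "{0, 1}" t] by simp
      moreover have "1 \<le> t 1" using t(1) \<open>2 \<le> s\<close> by simp
      ultimately show ?thesis using t(2) by linarith
    qed
    moreover have "x \<in> mats s r" unfolding x_def by (rule restrict_rows_mats[OF c(1)])
    ultimately show ?thesis by (metis order_refl)
  qed
qed

lemma sticky_exists_if_radius_ge_rows: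
  assumes "2 \<le> s" "s \<le> R + 1" "R + 1 \<le> s * r"
  shows "\<exists>m :: nat \<Rightarrow> nat \<Rightarrow> 'a::{ab_group_add,zero_neq_one}.
           sticky s r R (nrt_ball s r (\<lambda>i j. 0) R) m"
proof -
  obtain t where t: "\<forall>i<s. 1 \<le> t i \<and> t i \<le> r" "(\<Sum>i<s. t i) = R + 1"
    using exists_bounded_summands[of s "R + 1" r] assms by auto
  have "sticky s r R (nrt_ball s r (\<lambda>i j. 0) R) (profile_mat s t :: nat \<Rightarrow> nat \<Rightarrow> 'a)"
    using t assms profile_mat_ball_meets_zero_ball[OF t assms(1), where 'a = 'a]
    by (simp add: sticky_zero_ball_iff profile_mat_mats nrt_wt_profile_mat)
  then show ?thesis by blast
qed

lemma rows_budget_le: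
  fixes b s R D r :: nat
  assumes "b \<le> s" "D \<le> R" "D \<le> b * r" "1 \<le> r" "r * (s - R - 1) + 1 \<le> R"
  shows "s - b + D \<le> 2 * R"
proof (cases "s - R - 1 < b")
  case True
  then show ?thesis using assms(2) by linarith
next
  case False
  define e where "e = s - R - 1"
  have "b \<le> e" using False by (simp add: e_def)
  have "(e - b) * 1 \<le> (e - b) * r" using assms(4) by (intro mult_le_mono2)
  moreover have "(e - b) * r + b * r = e * r"
    using \<open>b \<le> e\<close> by (simp add: add_mult_distrib[symmetric])
  moreover have "e * r + 1 \<le> R" "s \<le> R + 1 + e" using assms(5) by (simp_all add: e_def mult.commute)
  ultimately show ?thesis using \<open>b \<le> e\<close> assms(1-3) by linarith
qed

lemma ones_mat_ball_meets_zero_ball: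
  fixes c :: "nat \<Rightarrow> nat \<Rightarrow> 'a::{ab_group_add,zero_neq_one}"
  assumes "0 < r" "r * (s - R - 1) + 1 \<le> R"
    and c: "c \<in> mats s r" "nrt_dist s r (profile_mat s (\<lambda>_. 1)) c \<le> R"
  shows "\<exists>x\<in>mats s r. nrt_dist s r x c \<le> R \<and> nrt_wt s r x \<le> R"
proof -
  define m where "m = (profile_mat s (\<lambda>_. 1) :: nat \<Rightarrow> nat \<Rightarrow> 'a)"
  have m_row: "row_wt r (m i) = 1" if "i < s" for i
    using row_wt_profile_mat[of i s "\<lambda>_. 1" r] that assms(1) by (simp add: m_def)
  define d where "d i = row_wt r (\<lambda>j. m i j - c i j)" for i
  define D where "D = (\<Sum>i<s. d i)"
  have D_le: "D \<le> R" using c(2) by (simp add: nrt_dist_def nrt_wt_def D_def d_def m_def)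
  define N where "N = {i. i < s \<and> d i = 0}"
  define B where "B = {..<s} - N"
  have c_row_N: "row_wt r (c i) = 1" if "i \<in> N" for i
    using row_wt_eq_if_diff_less[of r "m i" "c i"] that m_row by (simp add: d_def N_def)
  have c_row_B: "row_wt r (c i) \<le> d i" if "i \<in> B" for i
    using row_wt_le_max_diff[of r "c i" "m i"] that m_row[of i] by (auto simp: d_def B_def N_def)
  have "D = (\<Sum>i\<in>B. d i)"
    unfolding D_def by (rule sum.mono_neutral_right) (auto simp: B_def N_def)
  also have "\<dots> \<le> card B * r"
    using sum_bounded_above[of B d r] by (simp add: d_def row_wt_le)
  finally have D_B: "D \<le> card B * r" .
  have card_BN: "card B + card N = s"
    unfolding B_def using card_Diff_subset[of N "{..<s}"] card_mono[of "{..<s}" N]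
    by (fastforce simp: N_def)
  obtain K where K: "K \<subseteq> N" "card K = min (card N) (R - D)"
    using obtain_subset_with_card_n[of "min (card N) (R - D)" N] by auto
  have fin: "finite N" "finite K" "finite B" using K(1) by (auto simp: N_def B_def finite_subset)
  define x where "x = restrict_rows (- (N - K)) c"
  have "{..<s} \<inter> - (N - K) = B \<union> K" using K(1) by (auto simp: B_def N_def)
  then have "nrt_wt s r x = (\<Sum>i\<in>B \<union> K. row_wt r (c i))"
    by (simp add: x_def nrt_wt_restrict_rows)
  also have "\<dots> = (\<Sum>i\<in>B. row_wt r (c i)) + (\<Sum>i\<in>K. row_wt r (c i))"
    using fin K(1) by (intro sum.union_disjoint) (auto simp: B_def)
  also have "\<dots> \<le> (\<Sum>i\<in>B. d i) + card K"
    using K(1) c_row_N by (intro add_mono sum_mono) (auto simp: c_row_B subset_iff)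
  finally have wt_x: "nrt_wt s r x \<le> R"
    using K(2) D_le \<open>D = (\<Sum>i\<in>B. d i)\<close> by linarith
  have "{..<s} - - (N - K) = N - K" by (auto simp: N_def)
  then have "nrt_dist s r x c = card N - card K"
    using fin K(1) by (simp add: x_def nrt_dist_restrict_rows c_row_N card_Diff_subset)
  moreover have "card N - card K \<le> R"
    using rows_budget_le[of "card B" s D R r] card_BN D_le D_B K(2) assms by linarith
  ultimately show ?thesis
    using wt_x restrict_rows_mats[OF c(1)] by (metis x_def)
qed

lemma sticky_exists_if_rows_gt_radius:
  assumes "0 < r" "R < s" "r * (s - R - 1) + 1 \<le> R"
  shows "\<exists>m :: nat \<Rightarrow> nat \<Rightarrow> 'a::{ab_group_add,zero_neq_one}.
           sticky s r R (nrt_ball s r (\<lambda>i j. 0) R) m"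
proof -
  have "nrt_wt s r (profile_mat s (\<lambda>_. 1) :: nat \<Rightarrow> nat \<Rightarrow> 'a) = s"
    using nrt_wt_profile_mat[of s "\<lambda>_. 1" r] assms(1) by simp
  then have "sticky s r R (nrt_ball s r (\<lambda>i j. 0) R) (profile_mat s (\<lambda>_. 1) :: nat \<Rightarrow> nat \<Rightarrow> 'a)"
    using assms ones_mat_ball_meets_zero_ball[OF assms(1,3), where 'a = 'a]
    by (simp add: sticky_zero_ball_iff profile_mat_mats)
  then show ?thesis by blast
qed

theorem mainTheorem5:
  fixes s r R :: nat
  assumes "0 < s" "0 < r" "0 < R" "s \<ge> 2"
    and "(int r + 1) * (int R + 1) - int s * int r - 1 \<ge> 1"
    and "R + 1 \<le> s * r"
  shows "(\<exists>m :: nat \<Rightarrow> nat \<Rightarrow> 'a::{finite,field}.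
            sticky s r R (nrt_ball s r (\<lambda>i j. 0) R) m)
       \<and> \<not> (\<exists>C :: (nat \<Rightarrow> nat \<Rightarrow> 'a::{finite,field}) set.
            perfect_code s r R C \<and> nontrivial_code s r C)"
proof -
  obtain m :: "nat \<Rightarrow> nat \<Rightarrow> 'a" where m: "sticky s r R (nrt_ball s r (\<lambda>i j. 0) R) m"
  proof (cases "s \<le> R + 1")
    case True
    then show ?thesis using that sticky_exists_if_radius_ge_rows assms(4,6) by blast
  next
    case False
    then obtain e where e: "s = R + 1 + e" by (metis le_add_diff_inverse nat_le_linear)
    have "int (s * r + 2) \<le> int ((r + 1) * (R + 1))" using assms(5) by (simp add: algebra_simps)
    then have "r * e + 1 \<le> R" unfolding of_nat_le_iff e by (simp add: algebra_simps)
    then have "r * (s - R - 1) + 1 \<le> R" using e by simp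
    moreover have "R < s" using False by simp
    ultimately show ?thesis using that sticky_exists_if_rows_gt_radius[OF assms(2)] by blast
  qed
  moreover have "\<not> (perfect_code s r R C \<and> nontrivial_code s r C)"
    for C :: "(nat \<Rightarrow> nat \<Rightarrow> 'a) set"
  proof
    assume C: "perfect_code s r R C \<and> nontrivial_code s r C"
    then have "C \<noteq> {}" by (auto simp: nontrivial_code_def)
    then obtain c0 where "c0 \<in> C" by blast
    with C show False using no_perfect_code_if_sticky[OF m] by blast
  qed
  ultimately show ?thesis by blast
qed

end
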